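(* Let $n\ge 1$ be an integer and let $C$ be a real constant with $C>\frac{(n-4)^2}{16}$. Then $$\sum_{j=0}^n\sqrt{C+j}\;>\;(n+1)\sqrt{C+\tfrac{n}{2}-1}.$$ *)

theory Defs
  imports Complex_Main
begin

end

theory Submission
  imports Defs
begin

text \<open>Pair the terms j and n - j. Both pairs have the same sum, and the product
  (C + j)(C + n - j) is smallest for the endpoint pair, so by concavity of sqrt every
  pair sqrt (C + j) + sqrt (C + n - j) is at least sqrt C + sqrt (C + n). Squaring
  shows that the hypothesis 16 C > (n - 4)^2 is exactly what makes this endpoint pair
  exceed 2 sqrt (C + n/2 - 1); summing over all pairs counts the sum twice.\<close>

lemma sqrt_add_sqrt_le_of_mult_le:
  fixes a b c d :: real
  assumes "0 \<le> a" "0 \<le> b" "0 \<le> c" "0 \<le> d" "a + b = c + d" "c * d \<le> a * b"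
  shows "sqrt c + sqrt d \<le> sqrt a + sqrt b"
proof (rule power2_le_imp_le)
  have "sqrt (c * d) \<le> sqrt (a * b)"
    using assms by simp
  then show "(sqrt c + sqrt d)\<^sup>2 \<le> (sqrt a + sqrt b)\<^sup>2"
    using assms by (simp add: power2_eq_square algebra_simps real_sqrt_mult)
  show "0 \<le> sqrt a + sqrt b"
    using assms by simp
qed

lemma sqrt_add_sqrt_endpoints_gt:
  fixes m C :: real
  assumes "0 \<le> m" and "C > (m - 4)\<^sup>2 / 16"
  shows "2 * sqrt (C + m / 2 - 1) < sqrt C + sqrt (C + m)"
proof -
  have "C > 0"
    using assms(2) by (smt (verit) zero_le_power2 divide_nonneg_pos power2_eq_square)
  show ?thesis
  proof (cases "C + m / 2 - 1 \<le> 0")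
    case True
    then have "sqrt (C + m / 2 - 1) \<le> 0"
      by simp
    moreover have "0 < sqrt C" "0 \<le> sqrt (C + m)"
      using \<open>C > 0\<close> \<open>0 \<le> m\<close> by simp_all
    ultimately show ?thesis
      by linarith
  next
    case radicand_pos: False
    have "(2 * C + m - 4) / 2 < sqrt (C * (C + m))"
    proof (cases "2 * C + m - 4 < 0")
      case True
      then have "(2 * C + m - 4) / 2 < 0"
        by simp
      also have "0 \<le> sqrt (C * (C + m))"
        using \<open>C > 0\<close> \<open>0 \<le> m\<close> by simp
      finally show ?thesis .
    next
      case False
      have "((2 * C + m - 4) / 2)\<^sup>2 < C * (C + m)"
        using assms(2) by (simp add: power2_eq_square field_simps)
      then show ?thesis
        by (rule real_less_rsqrt)
    qed
    moreover have "(sqrt C + sqrt (C + m))\<^sup>2 = 2 * C + m + 2 * sqrt (C * (C + m))"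
      using \<open>C > 0\<close> \<open>0 \<le> m\<close>
      by (simp add: power2_sum real_sqrt_mult del: real_sqrt_mult_self)
    moreover have "(2 * sqrt (C + m / 2 - 1))\<^sup>2 = 4 * C + 2 * m - 4"
      using radicand_pos by (simp add: power_mult_distrib)
    ultimately have "(2 * sqrt (C + m / 2 - 1))\<^sup>2 < (sqrt C + sqrt (C + m))\<^sup>2"
      by (simp add: field_simps)
    then show ?thesis
      by (rule power2_less_imp_less) (use \<open>C > 0\<close> \<open>0 \<le> m\<close> in simp)
  qed
qed

lemma sum_atLeastAtMost_add_reflect:
  fixes f :: "nat \<Rightarrow> 'a::comm_monoid_add"
  shows "(\<Sum>j=0..n. f j + f (n - j)) = (\<Sum>j=0..n. f j) + (\<Sum>j=0..n. f j)"
  using sum.atLeastAtMost_rev[of f 0 n] by (simp add: sum.distrib)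

theorem lemma2:
  fixes n :: nat and C :: real
  assumes "n \<ge> 1"
    and "C > (real n - 4)^2 / 16"
  shows "(\<Sum>j=0..n. sqrt (C + real j)) > real (n + 1) * sqrt (C + real n / 2 - 1)"
proof -
  have "C \<ge> 0"
    using assms(2) by (smt (verit) zero_le_power2 divide_nonneg_pos)
  let ?f = "\<lambda>j::nat. sqrt (C + real j)"
  have "2 * sqrt (C + real n / 2 - 1) < ?f j + ?f (n - j)" if "j \<le> n" for j
  proof -
    have "real j * (real n - real j) \<ge> 0"
      using that by simp
    then have "sqrt C + sqrt (C + real n) \<le> ?f j + ?f (n - j)"
      using that \<open>C \<ge> 0\<close>
      by (intro sqrt_add_sqrt_le_of_mult_le) (auto simp: of_nat_diff algebra_simps)
    then show ?thesis
      using sqrt_add_sqrt_endpoints_gt[of "real n" C] assms(2) by simp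
  qed
  then have "(\<Sum>j=0..n. 2 * sqrt (C + real n / 2 - 1)) < (\<Sum>j=0..n. ?f j + ?f (n - j))"
    by (intro sum_strict_mono) auto
  also have "\<dots> = 2 * (\<Sum>j=0..n. ?f j)"
    using sum_atLeastAtMost_add_reflect[of ?f n] by simp
  finally show ?thesis
    by simp
qed

end
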